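(* Let $d$ be a power of two, and let $\lambda,\mu>0$ satisfy $\mu>1$ and $\frac{2}{\lambda}\left(1+\frac{1}{1-e^{-\mu/\lambda}}\right)\le\varepsilon$. Then for any $\tau>0$, the algorithm PrivHeavyHitter with parameters $\lambda,\tau,\mu$ is $\varepsilon$-$\nabla_0$DP.
   Context: Input: $x^1,\dots,x^n\in\{0,1\}^d$, $d$ a power of two; each bit is an attribute. For $I=\{a,\dots,b\}$ let $I_{\mathrm{left}}=\{a,\dots,\lfloor\frac{a+b}2\rfloor\}$, $I_{\mathrm{right}}=\{\lfloor\frac{a+b}2\rfloor+1,\dots,b\}$; for $s\in\{0,1\}^{|I|}$, $f^I_s=|\{i:x^i|_I=s\}|$. For $\ell\in\{0,\dots,\log_2 d\}$, $\mathcal{I}_\ell$ is the collection of sets $\{2^\ell(t-1)+1,\dots,2^\ell t\}$, $t\in[d/2^\ell]$. For string sets, $S_1\circ S_2=\{s_1s_2:s_1\in S_1,s_2\in S_2\}$. $\mathrm{Lap}(\lambda)$ has density $\frac1{2\lambda}e^{-|z|/\lambda}$. PrivHeavyHitter: set $L_{\{j\}}=\{0,1\}$ for all $j\in[d]$. For $\ell=1,\dots,\log_2d$: let $\tau_\ell=\tau+(\ell-1)\mu$; for each $I\in\mathcal{I}_\ell$, set $L_I=\emptyset$ and for each $s\in L_{I_{\mathrm{left}}}\circ L_{I_{\mathrm{right}}}$ compute $\hat f^I_s=\max\{f^I_s,\tau_\ell-\mu\}+Z$ with fresh independent $Z\sim\mathrm{Lap}(\lambda)$, and add $s$ to $L_I$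 if $\hat f^I_s>\tau_\ell$. Output $L_{[d]}$. $M$ is $\varepsilon$-$\nabla_0$DP if for all datasets differing only in entry $i$ and all sets $E$, $\Pr[M(x)\in E]\le e^{\varepsilon\|x^i-x'^i\|_0}\Pr[M(x')\in E]$ ($\|\cdot\|_0$ Hamming distance). *)

theory Defs
  imports "HOL-Probability.Probability"
begin

definition laplace_density :: "real \<Rightarrow> real \<Rightarrow> real" where
  "laplace_density lam z = exp (- \<bar>z\<bar> / lam) / (2 * lam)"

definition laplace :: "real \<Rightarrow> real measure" where
  "laplace lam = density lborel (\<lambda>z. ennreal (laplace_density lam z))"

definition hamming :: "bool list \<Rightarrow> bool list \<Rightarrow> nat" where
  "hamming u v = card {j. j < length u \<and> u ! j \<noteq> v ! j}"

definition conc :: "bool list set \<Rightarrow> bool list set \<Rightarrow> bool list set" where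
  "conc S1 S2 = {s1 @ s2 | s1 s2. s1 \<in> S1 \<and> s2 \<in> S2}"

text \<open>f^I_s for I = {2^l(t-1)+1, ..., 2^l t} (1-indexed), i.e. the positions
  2^l(t-1), ..., 2^l t - 1 of the 0-indexed list; counts indices i with x^i|_I = s.\<close>
definition freq :: "bool list list \<Rightarrow> nat \<Rightarrow> nat \<Rightarrow> bool list \<Rightarrow> nat" where
  "freq x l t s = length (filter (\<lambda>v. take (2^l) (drop (2^l * (t - 1)) v) = s) x)"

text \<open>The lists L_I of PrivHeavyHitter, for I the t-th block of level l, given the
  noise values Z (l, t, s) used for candidate s of block t at level l.
  The left/right halves of block t at level l+1 are blocks 2t-1 and 2t of level l.
  At level l+1 the threshold is tau_{l+1} = tau + l * mu.\<close>
fun phh_L :: "real \<Rightarrow> real \<Rightarrow> bool list list \<Rightarrow> (nat \<times> nat \<times> bool list \<Rightarrow> real)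
              \<Rightarrow> nat \<Rightarrow> nat \<Rightarrow> bool list set" where
  "phh_L tau mu x Z 0 t = {[False], [True]}"
| "phh_L tau mu x Z (Suc l) t =
     {s \<in> conc (phh_L tau mu x Z l (2 * t - 1)) (phh_L tau mu x Z l (2 * t)).
        max (real (freq x (Suc l) t s)) (tau + real l * mu - mu) + Z (Suc l, t, s)
          > tau + real l * mu}"

text \<open>All (I, s) pairs that may ever receive noise when d = 2^k.\<close>
definition noise_idx :: "nat \<Rightarrow> (nat \<times> nat \<times> bool list) set" where
  "noise_idx k = {(l, t, s). 1 \<le> l \<and> l \<le> k \<and> 1 \<le> t \<and> t \<le> 2^k div 2^l \<and> length s = 2^l}"

text \<open>Output distribution of PrivHeavyHitter (parameters lam, tau, mu; d = 2^k) on dataset x: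
  one independent Lap(lam) variable per possible (I, s) pair; each is used at most once.\<close>
definition PrivHeavyHitter :: "real \<Rightarrow> real \<Rightarrow> real \<Rightarrow> nat \<Rightarrow> bool list list \<Rightarrow> bool list set measure" where
  "PrivHeavyHitter lam tau mu k x =
     distr (PiM (noise_idx k) (\<lambda>_. laplace lam)) (count_space UNIV)
           (\<lambda>Z. phh_L tau mu x Z k 1)"

definition nabla0_DP :: "real \<Rightarrow> nat \<Rightarrow> (bool list list \<Rightarrow> 'b measure) \<Rightarrow> bool" where
  "nabla0_DP eps d M \<longleftrightarrow>
     (\<forall>x x' i E. length x' = length x \<and> (\<forall>v\<in>set x. length v = d) \<and> (\<forall>v\<in>set x'. length v = d)
        \<and> i < length x \<and> (\<forall>j<length x. j \<noteq> i \<longrightarrow> x ! j = x' ! j)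
        \<longrightarrow> measure (M x) E \<le> exp (eps * real (hamming (x ! i) (x' ! i))) * measure (M x') E)"

end

theory Submission
  imports Defs
begin

text \<open>
  By induction on the Hamming distance it suffices to flip one bit \<open>j\<close> of one row, turning
  \<open>u\<close> into \<open>u'\<close>. At every level this changes only the counts of the two strings \<open>u|I\<close> and
  \<open>u'|I\<close>, \<open>I\<close> the block containing \<open>j\<close>: the first loses one occurrence, the second gains
  one. Call the noise values of these \<open>2 log d\<close> strings critical. Along each of the two chains
  of critical strings the output depends on the critical noise only through the first level
  at which the test fails, and once these two levels are fixed the output is the same for both
  datasets and is determined by the other noise values. Hence both output probabilities are the
  same combination of the probabilities of the failure patterns, products of Laplace tails,
  which are compared factor by factor. For \<open>u'\<close> the thresholds only drop, and only the failing
  level costs \<open>exp (1 / lam)\<close>. For \<open>u\<close> every passing level costs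
  \<open>exp (exp (min 0 (z + 1) / lam) / lam)\<close>, \<open>z\<close> the gap between threshold and count; since the
  thresholds grow by \<open>mu\<close> per level while counts cannot grow, so do the gaps, and a potential
  argument bounds the total by \<open>(2 + 1 / (1 - exp (- mu / lam))) / lam\<close>.
\<close>

section \<open>The Laplace distribution\<close>

definition laplace_cdf :: "real \<Rightarrow> real \<Rightarrow> real" where
  "laplace_cdf lam y = (if y \<le> 0 then exp (y / lam) / 2 else 1 - exp (- y / lam) / 2)"

lemma laplace_cdf_minus: "laplace_cdf lam (- y) = 1 - laplace_cdf lam y"
  by (auto simp: laplace_cdf_def)

lemma sets_laplace [simp, measurable_cong]: "sets (laplace lam) = sets borel"
  by (simp add: laplace_def)

lemma space_laplace [simp]: "space (laplace lam) = UNIV"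
  by (simp add: laplace_def)

lemma borel_measurable_laplace_density [measurable]: "laplace_density lam \<in> borel_measurable borel"
  unfolding laplace_density_def by measurable

lemma emeasure_laplace_singleton: "emeasure (laplace lam) {y} = 0"
  unfolding laplace_def by (subst emeasure_density) auto

lemma emeasure_laplace_uminus:
  assumes "A \<in> sets borel"
  shows "emeasure (laplace lam) (uminus -` A) = emeasure (laplace lam) A"
proof -
  have "emeasure (laplace lam) A = (\<integral>\<^sup>+x. ennreal (laplace_density lam x) * indicator A x \<partial>lborel)"
    using assms by (simp add: laplace_def emeasure_density)
  also have "\<dots> = (\<integral>\<^sup>+x. ennreal (laplace_density lam (- x)) * indicator A (- x) \<partial>lborel)"
    using assms nn_integral_real_affine[of "\<lambda>x. ennreal (laplace_density lam x) * indicator A x" "- 1" 0]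
    by simp
  also have "\<dots> = emeasure (laplace lam) (uminus -` A)"
    using assms measurable_sets_borel[OF borel_measurable_uminus[OF measurable_ident] assms]
    by (simp add: laplace_def emeasure_density laplace_density_def indicator_def)
  finally show ?thesis ..
qed

context
  fixes lam :: real
  assumes lam: "lam > 0"
begin

lemma exp_div_le_one: "y \<le> 0 \<Longrightarrow> exp (y / lam) \<le> 1"
  using lam by (simp add: divide_nonpos_pos)

lemma laplace_cdf_nonneg: "0 \<le> laplace_cdf lam y"
proof (cases "y \<le> 0")
  case False
  then have "exp (- y / lam) \<le> 1" by (intro exp_div_le_one) simp
  moreover have "laplace_cdf lam y = 1 - exp (- y / lam) / 2" using False by (simp add: laplace_cdf_def)
  ultimately show ?thesis by linarith
qed (simp add: laplace_cdf_def)

lemma laplace_cdf_mono: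
  assumes "y \<le> y'"
  shows "laplace_cdf lam y \<le> laplace_cdf lam y'"
proof -
  have "exp (y / lam) \<le> exp (y' / lam)" "exp (- y' / lam) \<le> exp (- y / lam)"
    using assms lam by (simp_all add: divide_right_mono)
  moreover have "exp (y / lam) \<le> 1" if "y \<le> 0" using that by (rule exp_div_le_one)
  moreover have "exp (- y' / lam) \<le> 1" if "0 < y'" using that by (intro exp_div_le_one) simp
  ultimately show ?thesis using assms by (auto simp: laplace_cdf_def simp del: exp_le_one_iff)
qed

lemma laplace_cdf_mult_exp_antimono:
  assumes "y \<le> y'"
  shows "laplace_cdf lam y' * exp (- y' / lam) \<le> laplace_cdf lam y * exp (- y / lam)"
proof -
  txt \<open>For \<open>y > 0\<close> the product is \<open>w - w\<^sup>2 / 2\<close> with \<open>w = exp (- y / lam) \<le> 1\<close>,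
    increasing in \<open>w\<close>; for \<open>y \<le> 0\<close> it is \<open>1 / 2\<close>, the maximum of \<open>w - w\<^sup>2 / 2\<close>.\<close>
  have parabola: "w' - w'\<^sup>2 / 2 \<le> w - w\<^sup>2 / 2" if "0 \<le> w'" "w' \<le> w" "w \<le> 1" for w w' :: real
  proof -
    have "0 \<le> (w - w') * (1 - (w + w') / 2)" using that by simp
    also have "\<dots> = (w - w\<^sup>2 / 2) - (w' - w'\<^sup>2 / 2)"
      by (simp add: power2_eq_square field_simps)
    finally show ?thesis by simp
  qed
  have product: "laplace_cdf lam y * exp (- y / lam) =
      (if y \<le> 0 then 1 / 2 else exp (- y / lam) - (exp (- y / lam))\<^sup>2 / 2)" for y
    by (simp add: laplace_cdf_def power2_eq_square algebra_simps flip: exp_add)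
  have "exp (- y' / lam) \<le> exp (- y / lam)"
    using assms lam by (simp add: divide_right_mono)
  then show ?thesis
    unfolding product using assms exp_div_le_one[of "- y"] exp_div_le_one[of "- y'"]
      parabola[of "exp (- y' / lam)" 1]
    by (auto intro!: parabola)
qed

lemma laplace_cdf_shift_le:
  assumes "0 \<le> d"
  shows "laplace_cdf lam (y + d) \<le> exp (d / lam) * laplace_cdf lam y"
proof -
  have inverse: "exp (- t / lam) * exp (t / lam) = 1" for t
    by (simp flip: exp_add)
  have "laplace_cdf lam (y + d) = laplace_cdf lam (y + d) * exp (- (y + d) / lam) * exp ((y + d) / lam)"
    by (simp only: mult.assoc inverse mult_1_right)
  also have "\<dots> \<le> laplace_cdf lam y * exp (- y / lam) * exp ((y + d) / lam)"
    using laplace_cdf_mult_exp_antimono[of y "y + d"] assms by (intro mult_right_mono) simp_all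
  also have "\<dots> = exp (d / lam) * laplace_cdf lam y"
    by (simp add: mult.assoc mult.commute add_divide_distrib flip: exp_add)
  finally show ?thesis .
qed

lemma laplace_cdf_of_nonneg: "0 \<le> y \<Longrightarrow> laplace_cdf lam y = 1 - exp (- y / lam) / 2"
  by (auto simp: laplace_cdf_def)

lemma laplace_cdf_step_le:
  assumes "0 \<le> w'" "w' \<le> w" "w \<le> w' + 1"
  shows "laplace_cdf lam w \<le> exp (exp (- w' / lam) / lam) * laplace_cdf lam w'"
proof -
  define v where "v = exp (- w' / lam)"
  have v: "0 < v" "v \<le> 1"
    using assms exp_div_le_one[of "- w'"] by (simp_all add: v_def)
  have "1 - 1 / lam \<le> 1 - (w - w') / lam"
    using assms lam by (simp add: divide_right_mono)
  also have "\<dots> \<le> exp (- ((w - w') / lam))"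
    using exp_ge_add_one_self[of "- ((w - w') / lam)"] by simp
  finally have "v * (1 - 1 / lam) \<le> v * exp (- ((w - w') / lam))"
    using v by simp
  also have "\<dots> = exp (- w / lam)"
    by (simp add: v_def diff_divide_distrib flip: exp_add)
  finally have "laplace_cdf lam w \<le> (1 - v / 2) + v / 2 * (1 / lam)"
    using assms by (simp add: laplace_cdf_of_nonneg algebra_simps)
  also have "\<dots> \<le> (1 - v / 2) + (1 - v / 2) * (v / lam)"
    using v lam by (intro add_left_mono) (simp add: field_simps)
  also have "\<dots> = (1 - v / 2) * (1 + v / lam)"
    by (simp add: algebra_simps)
  also have "\<dots> \<le> (1 - v / 2) * exp (v / lam)"
    using v exp_ge_add_one_self[of "v / lam"] by (intro mult_left_mono) simp_all
  finally show ?thesis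
    using assms by (simp add: laplace_cdf_of_nonneg v_def mult.commute)
qed

lemma emeasure_laplace_atLeast:
  assumes "0 \<le> y"
  shows "emeasure (laplace lam) {y..} = ennreal (laplace_cdf lam (- y))"
proof -
  have "DERIV (\<lambda>x. 1 - exp (- x / lam) / 2) x :> laplace_density lam x" if "y \<le> x" for x
    using that assms lam by (auto intro!: derivative_eq_intros simp: laplace_density_def field_simps)
  moreover have "((\<lambda>x. 1 - exp (- x / lam) / 2) \<longlongrightarrow> 1) at_top"
  proof -
    have "filterlim (\<lambda>x. - (1 / lam) * x) at_bot at_top"
      using lam by (intro filterlim_tendsto_neg_mult_at_bot[OF tendsto_const] filterlim_ident) simp_all
    then have "((\<lambda>x. exp (- x / lam)) \<longlongrightarrow> 0) at_top"
      by (intro filterlim_compose[OF exp_at_bot]) simp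
    from tendsto_diff[OF tendsto_const tendsto_divide[OF this tendsto_const]]
    show ?thesis by simp
  qed
  ultimately have "(\<integral>\<^sup>+x. ennreal (laplace_density lam x) * indicator {y..} x \<partial>lborel)
      = ennreal (1 - (1 - exp (- y / lam) / 2))"
    using lam by (intro nn_integral_FTC_atLeast) (simp_all add: laplace_density_def)
  then show ?thesis
    using assms by (simp add: laplace_def emeasure_density laplace_cdf_def)
qed

lemma emeasure_laplace_greaterThan:
  assumes "0 \<le> y"
  shows "emeasure (laplace lam) {y<..} = ennreal (laplace_cdf lam (- y))"
proof -
  have "emeasure (laplace lam) {y<..} + emeasure (laplace lam) {y} = emeasure (laplace lam) ({y<..} \<union> {y})"
    by (rule plus_emeasure) auto
  moreover have "{y<..} \<union> {y} = {y..}" by auto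
  ultimately show ?thesis
    using assms by (simp add: emeasure_laplace_singleton emeasure_laplace_atLeast)
qed

lemma prob_space_laplace: "prob_space (laplace lam)"
proof
  have "emeasure (laplace lam) {..<0} + emeasure (laplace lam) {0..} = emeasure (laplace lam) ({..<0} \<union> {0..})"
    by (rule plus_emeasure) auto
  moreover have "{..<0} = uminus -` {0::real<..}" "{..<0} \<union> {0..} = (UNIV :: real set)" by auto
  ultimately have "emeasure (laplace lam) UNIV = ennreal (1 / 2) + ennreal (1 / 2)"
    by (simp add: emeasure_laplace_uminus emeasure_laplace_greaterThan emeasure_laplace_atLeast laplace_cdf_def)
  also have "\<dots> = 1" by (subst ennreal_plus[symmetric]) auto
  finally show "emeasure (laplace lam) (space (laplace lam)) = 1" by simp
qed

lemma measure_laplace_greaterThan: "measure (laplace lam) {y<..} = laplace_cdf lam (- y)"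
proof (cases "0 \<le> y")
  case True
  then show ?thesis
    using laplace_cdf_nonneg by (simp add: measure_def emeasure_laplace_greaterThan)
next
  case False
  interpret prob_space "laplace lam" by (rule prob_space_laplace)
  have "{..y} = uminus -` {- y..}" by auto
  then have "measure (laplace lam) {..y} = laplace_cdf lam y"
    using False laplace_cdf_nonneg by (simp add: measure_def emeasure_laplace_uminus emeasure_laplace_atLeast)
  moreover have "{y<..} = UNIV - {..y}" by auto
  ultimately show ?thesis
    using prob_compl[of "{..y}"] by (simp add: laplace_cdf_minus)
qed

lemma measure_laplace_atMost: "measure (laplace lam) {..y} = laplace_cdf lam y"
proof -
  interpret prob_space "laplace lam" by (rule prob_space_laplace)
  have "{..y} = UNIV - {y<..}" by auto
  then show ?thesis
    using prob_compl[of "{y<..}"] by (simp add: measure_laplace_greaterThan laplace_cdf_minus)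
qed

end

section \<open>A potential bound on the accumulated privacy loss\<close>

definition pass_loss :: "real \<Rightarrow> real \<Rightarrow> real \<Rightarrow> real" where
  "pass_loss lam mu z = (if z < mu then exp (min 0 (z + 1) / lam) / lam else 0)"

definition pass_loss_potential :: "real \<Rightarrow> real \<Rightarrow> real \<Rightarrow> real" where
  "pass_loss_potential lam mu z = exp (min 0 (z + 1) / lam) / (lam * (1 - exp (- mu / lam)))
     + (if - 1 \<le> z then 1 / lam else 0) + (if mu - 1 \<le> z then 1 / lam else 0)"

context
  fixes lam mu :: real
  assumes lam: "lam > 0" and mu: "mu \<ge> 1"
begin

lemma exp_minus_mu_less_one: "exp (- mu / lam) < 1"
  using lam mu by (simp add: divide_neg_pos)

lemma one_le_geometric_factor: "1 \<le> 1 / (1 - exp (- mu / lam))"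
  using exp_minus_mu_less_one by (simp add: field_simps)

lemma pass_loss_nonneg: "0 \<le> pass_loss lam mu z"
  using lam by (simp add: pass_loss_def)

lemma pass_loss_potential_eq:
  "pass_loss_potential lam mu z = A * E z + (if - 1 \<le> z then B else 0) + (if mu - 1 \<le> z then B else 0)"
  if "A = 1 / (lam * (1 - exp (- mu / lam)))" "B = 1 / lam" "E = (\<lambda>z. exp (min 0 (z + 1) / lam))"
  by (simp add: that pass_loss_potential_def)

lemma pass_loss_potential_nonneg: "0 \<le> pass_loss_potential lam mu z"
  using lam exp_minus_mu_less_one by (simp add: pass_loss_potential_def)

lemma pass_loss_potential_mono:
  assumes "z \<le> z'"
  shows "pass_loss_potential lam mu z \<le> pass_loss_potential lam mu z'"
proof -
  define A B E where "A = 1 / (lam * (1 - exp (- mu / lam)))" and "B = 1 / lam"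
    and "E = (\<lambda>z. exp (min 0 (z + 1) / lam))"
  have "A * E z \<le> A * E z'"
    using assms lam exp_minus_mu_less_one by (intro mult_left_mono) (simp_all add: A_def E_def divide_right_mono)
  moreover have "0 \<le> B" using lam by (simp add: B_def)
  ultimately show ?thesis
    using assms by (simp add: pass_loss_potential_eq[OF A_def B_def E_def])
qed

lemma pass_loss_potential_le: "pass_loss_potential lam mu z \<le> (2 + 1 / (1 - exp (- mu / lam))) / lam"
proof -
  define A B E where "A = 1 / (lam * (1 - exp (- mu / lam)))" and "B = 1 / lam"
    and "E = (\<lambda>z. exp (min 0 (z + 1) / lam))"
  have "A * E z \<le> A * 1"
    using lam exp_minus_mu_less_one by (intro mult_left_mono) (simp_all add: A_def E_def divide_nonpos_pos)
  moreover have "0 \<le> B" using lam by (simp add: B_def)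
  moreover have "(2 + 1 / (1 - exp (- mu / lam))) / lam = A + B + B"
    using lam exp_minus_mu_less_one by (simp add: A_def B_def field_simps)
  ultimately show ?thesis
    by (simp add: pass_loss_potential_eq[OF A_def B_def E_def])
qed

lemma pass_loss_potential_step:
  "pass_loss_potential lam mu (z - mu) + pass_loss lam mu z \<le> pass_loss_potential lam mu z"
proof -
  define A B E where "A = 1 / (lam * (1 - exp (- mu / lam)))" and "B = 1 / lam"
    and "E = (\<lambda>z. exp (min 0 (z + 1) / lam))"
  note potential = pass_loss_potential_eq[OF A_def B_def E_def]
  have A: "0 \<le> A" "A * exp (- mu / lam) + B = A"
    using lam exp_minus_mu_less_one by (simp_all add: A_def B_def field_simps)
  have shifted: "A * E (z - mu) \<le> A * E z"
    using A lam mu by (intro mult_left_mono) (simp_all add: E_def divide_right_mono)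
  consider "z < - 1" | "- 1 \<le> z" "z < mu" | "mu \<le> z" by linarith
  then show ?thesis
  proof cases
    case 1
    txt \<open>Below \<open>-1\<close> the potential is geometric in \<open>z\<close>, which pays for the loss.\<close>
    have "E (z - mu) = exp (- mu / lam) * E z"
      using 1 mu by (simp add: E_def add_divide_distrib diff_divide_distrib flip: exp_add)
    moreover have "pass_loss lam mu z = B * E z"
      using 1 mu by (simp add: pass_loss_def B_def E_def)
    ultimately have "pass_loss_potential lam mu (z - mu) + pass_loss lam mu z = (A * exp (- mu / lam) + B) * E z"
      using 1 mu by (simp add: potential algebra_simps)
    then show ?thesis
      using 1 mu A(2) by (simp add: potential)
  next
    case 2
    then have "pass_loss lam mu z = B"
      by (simp add: pass_loss_def B_def)
    then show ?thesis
      using 2 shifted mu by (simp add: potential)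
  next
    case 3
    then show ?thesis
      using pass_loss_potential_mono[of "z - mu" z] mu by (simp add: pass_loss_def)
  qed
qed

lemma sum_pass_loss_le:
  assumes "\<And>l. 1 \<le> l \<Longrightarrow> z l + mu \<le> z (Suc l)"
  shows "(\<Sum>l = 1..n. pass_loss lam mu (z l)) \<le> (2 + 1 / (1 - exp (- mu / lam))) / lam"
proof (cases "n = 0")
  case True
  then show ?thesis
    using lam one_le_geometric_factor by simp
next
  case False
  have "(\<Sum>l = 1..n. pass_loss lam mu (z l)) \<le> pass_loss_potential lam mu (z n)" if "1 \<le> n" for n
    using that
  proof (induction n rule: nat_induct_at_least)
    case base
    then show ?case
      using pass_loss_potential_step[of "z 1"] pass_loss_potential_nonneg[of "z 1 - mu"] by simp
  next
    case (Suc n)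
    have "(\<Sum>l = 1..Suc n. pass_loss lam mu (z l)) \<le> pass_loss_potential lam mu (z n) + pass_loss lam mu (z (Suc n))"
      using Suc by simp
    also have "\<dots> \<le> pass_loss_potential lam mu (z (Suc n) - mu) + pass_loss lam mu (z (Suc n))"
      using assms[of n] Suc.hyps by (simp add: pass_loss_potential_mono)
    also have "\<dots> \<le> pass_loss_potential lam mu (z (Suc n))"
      by (rule pass_loss_potential_step)
    finally show ?case .
  qed
  with False show ?thesis
    using pass_loss_potential_le[of "z n"] by (meson less_one not_less order.trans)
qed

end

section \<open>Probabilities of first-failure patterns\<close>

context
  fixes lam mu :: real
  assumes lam: "lam > 0" and mu: "mu > 0"
begin

lemma laplace_cdf_shift_le_one:
  assumes "0 \<le> d" "d \<le> 1"
  shows "laplace_cdf lam (y + d) \<le> exp (1 / lam) * laplace_cdf lam y"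
proof -
  have "laplace_cdf lam (y + d) \<le> exp (d / lam) * laplace_cdf lam y"
    using lam assms by (intro laplace_cdf_shift_le) simp_all
  also have "\<dots> \<le> exp (1 / lam) * laplace_cdf lam y"
    using lam assms laplace_cdf_nonneg[OF lam] by (intro mult_right_mono) (simp_all add: divide_right_mono)
  finally show ?thesis .
qed

lemma pass_prob_le:
  "laplace_cdf lam (- min z mu) \<le> exp (pass_loss lam mu z) * laplace_cdf lam (- min (z + 1) mu)"
proof -
  consider "mu \<le> z" | "z < mu" "z + 1 \<le> 0" | "z < mu" "0 < z + 1" by linarith
  then show ?thesis
  proof cases
    case 1
    then show ?thesis by (simp add: pass_loss_def)
  next
    case 2
    then have "laplace_cdf lam (- z) \<le> exp (exp (- (- (z + 1)) / lam) / lam) * laplace_cdf lam (- (z + 1))"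
      by (intro laplace_cdf_step_le[OF lam]) simp_all
    with 2 mu show ?thesis by (simp add: pass_loss_def add.commute)
  next
    case 3
    have "laplace_cdf lam (- min (z + 1) mu + (min (z + 1) mu - z)) \<le> exp (1 / lam) * laplace_cdf lam (- min (z + 1) mu)"
      using 3 by (intro laplace_cdf_shift_le_one) simp_all
    with 3 show ?thesis by (simp add: pass_loss_def)
  qed
qed

lemma fail_prob_le: "laplace_cdf lam (min (z + 1) mu) \<le> exp (1 / lam) * laplace_cdf lam (min z mu)"
  using laplace_cdf_shift_le_one[of "min (z + 1) mu - min z mu" "min z mu"] by simp

end

definition first_fail_prob :: "real \<Rightarrow> nat \<Rightarrow> (nat \<Rightarrow> real) \<Rightarrow> nat \<Rightarrow> real" where
  "first_fail_prob lam k v s = (\<Prod>l = 1..k.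
     if l < s then laplace_cdf lam (- v l) else if l = s then laplace_cdf lam (v l) else 1)"

lemma first_fail_prob_nonneg: "lam > 0 \<Longrightarrow> 0 \<le> first_fail_prob lam k v s"
  unfolding first_fail_prob_def by (intro prod_nonneg) (simp add: laplace_cdf_nonneg)

lemma first_fail_prob_le:
  assumes lam: "lam > 0" and nonneg: "\<And>l. 0 \<le> c l"
    and pass: "\<And>l. l < s \<Longrightarrow> laplace_cdf lam (- v l) \<le> exp (c l) * laplace_cdf lam (- v' l)"
    and fail: "laplace_cdf lam (v s) \<le> exp (c s) * laplace_cdf lam (v' s)"
  shows "first_fail_prob lam k v s \<le> exp (\<Sum>l = 1..k. c l) * first_fail_prob lam k v' s"
proof -
  have "first_fail_prob lam k v s \<le> (\<Prod>l = 1..k. exp (c l) *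
      (if l < s then laplace_cdf lam (- v' l) else if l = s then laplace_cdf lam (v' l) else 1))"
    unfolding first_fail_prob_def
  proof (intro prod_mono conjI)
    fix l
    show "0 \<le> (if l < s then laplace_cdf lam (- v l) else if l = s then laplace_cdf lam (v l) else 1)"
      using lam by (simp add: laplace_cdf_nonneg)
    show "(if l < s then laplace_cdf lam (- v l) else if l = s then laplace_cdf lam (v l) else 1)
        \<le> exp (c l) * (if l < s then laplace_cdf lam (- v' l) else if l = s then laplace_cdf lam (v' l) else 1)"
      using pass[of l] fail nonneg[of l] by auto
  qed
  also have "\<dots> = exp (\<Sum>l = 1..k. c l) * first_fail_prob lam k v' s"
    by (simp add: first_fail_prob_def prod.distrib exp_sum)
  finally show ?thesis .
qed

section \<open>Blocks and candidate lists\<close>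

definition block :: "nat \<Rightarrow> nat \<Rightarrow> bool list \<Rightarrow> bool list" where
  "block l t v = take (2 ^ l) (drop (2 ^ l * (t - 1)) v)"

lemma freq_conv_block: "freq x l t s = length (filter (\<lambda>v. block l t v = s) x)"
  by (simp add: freq_def block_def)

lemma length_block: "length (block l t v) = min (2 ^ l) (length v - 2 ^ l * (t - 1))"
  by (simp add: block_def)

lemma nth_block: "m < length (block l t v) \<Longrightarrow> block l t v ! m = v ! (2 ^ l * (t - 1) + m)"
  by (auto simp: block_def nth_drop)

lemma block_left_child: "1 \<le> t \<Longrightarrow> block l (2 * t - 1) v = take (2 ^ l) (block (Suc l) t v)"
proof -
  assume "1 \<le> t"
  then have offset: "2 ^ l * (2 * t - 1 - 1) = 2 ^ Suc l * (t - 1)" by (simp add: algebra_simps)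
  show ?thesis unfolding block_def offset by (simp add: min_def)
qed

lemma block_right_child: "1 \<le> t \<Longrightarrow> block l (2 * t) v = drop (2 ^ l) (block (Suc l) t v)"
proof -
  assume "1 \<le> t"
  then have "2 ^ l * (2 * t - 1) = 2 ^ Suc l * (t - 1) + 2 ^ l" by (simp add: algebra_simps)
  then show ?thesis by (simp add: block_def drop_take add.commute)
qed

definition phh_test :: "real \<Rightarrow> real \<Rightarrow> bool list list \<Rightarrow> (nat \<times> nat \<times> bool list \<Rightarrow> real)
    \<Rightarrow> nat \<Rightarrow> nat \<Rightarrow> bool list \<Rightarrow> bool" where
  "phh_test tau mu x Z l t s \<longleftrightarrow>
     tau + real (l - 1) * mu < max (real (freq x l t s)) (tau + real (l - 1) * mu - mu) + Z (l, t, s)"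

lemma phh_L_Suc: "phh_L tau mu x Z (Suc l) t =
    {s \<in> conc (phh_L tau mu x Z l (2 * t - 1)) (phh_L tau mu x Z l (2 * t)). phh_test tau mu x Z (Suc l) t s}"
  by (simp add: phh_test_def)

lemma length_phh_L: "s \<in> phh_L tau mu x Z l t \<Longrightarrow> length s = 2 ^ l"
proof (induction l arbitrary: t s)
  case (Suc l)
  then show ?case by (auto simp: conc_def)
qed auto

lemma phh_L_cong:
  assumes "\<And>l' t' s. 1 \<le> l' \<Longrightarrow> l' \<le> l \<Longrightarrow> 1 \<le> t' \<Longrightarrow>
      s \<in> conc (phh_L tau mu x Z (l' - 1) (2 * t' - 1)) (phh_L tau mu x Z (l' - 1) (2 * t')) \<Longrightarrow>
      phh_test tau mu x Z l' t' s = phh_test tau mu x' Z' l' t' s"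
    and "1 \<le> t"
  shows "phh_L tau mu x Z l t = phh_L tau mu x' Z' l t"
  using assms
proof (induction l arbitrary: t)
  case (Suc l)
  have "phh_L tau mu x Z l t' = phh_L tau mu x' Z' l t'" if "1 \<le> t'" for t'
    using Suc.prems that by (intro Suc.IH) auto
  with Suc.prems show ?case
    unfolding phh_L_Suc by (auto simp del: phh_L.simps)
qed simp

lemma blocks_of_candidate:
  assumes "1 \<le> t"
    and "block (Suc l) t v \<in> conc (phh_L tau mu x Z l (2 * t - 1)) (phh_L tau mu x Z l (2 * t))"
  shows "block l (2 * t - 1) v \<in> phh_L tau mu x Z l (2 * t - 1)"
    and "block l (2 * t) v \<in> phh_L tau mu x Z l (2 * t)"
proof -
  from assms(2) obtain s1 s2 where s: "block (Suc l) t v = s1 @ s2"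
    "s1 \<in> phh_L tau mu x Z l (2 * t - 1)" "s2 \<in> phh_L tau mu x Z l (2 * t)"
    by (auto simp: conc_def)
  then have "length s1 = 2 ^ l" by (intro length_phh_L)
  with s show "block l (2 * t - 1) v \<in> phh_L tau mu x Z l (2 * t - 1)"
    and "block l (2 * t) v \<in> phh_L tau mu x Z l (2 * t)"
    unfolding block_left_child[OF assms(1)] block_right_child[OF assms(1)] s(1) by simp_all
qed

lemma measurable_count_space_finite_subsets:
  assumes "finite S" and subset: "\<And>\<omega>. \<omega> \<in> space M \<Longrightarrow> f \<omega> \<subseteq> S"
    and pred: "\<And>s. s \<in> S \<Longrightarrow> Measurable.pred M (\<lambda>\<omega>. s \<in> f \<omega>)"
  shows "f \<in> measurable M (count_space UNIV)"
proof -
  have "f \<in> measurable M (count_space (Pow S))"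
  proof (subst measurable_count_space_eq2[OF finite_Pow_iff[THEN iffD2, OF \<open>finite S\<close>]],
      intro conjI Pi_I ballI)
    fix \<omega> assume "\<omega> \<in> space M"
    with subset show "f \<omega> \<in> Pow S" by blast
  next
    fix A assume "A \<in> Pow S"
    then have "f -` {A} \<inter> space M = {\<omega> \<in> space M. \<forall>s\<in>S. s \<in> f \<omega> \<longleftrightarrow> s \<in> A}"
      using subset by blast
    also have "\<dots> \<in> sets M"
      using \<open>finite S\<close> pred by measurable
    finally show "f -` {A} \<inter> space M \<in> sets M" .
  qed
  then show ?thesis
    by (rule measurable_compose) (rule measurable_count_space)
qed

lemma mem_conc_iff:
  assumes "\<And>s1. s1 \<in> A \<Longrightarrow> length s1 = n"
  shows "s \<in> conc A B \<longleftrightarrow> take n s \<in> A \<and> drop n s \<in> B"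
proof
  assume "s \<in> conc A B"
  then obtain s1 s2 where "s = s1 @ s2" "s1 \<in> A" "s2 \<in> B" by (auto simp: conc_def)
  with assms show "take n s \<in> A \<and> drop n s \<in> B" by auto
next
  assume "take n s \<in> A \<and> drop n s \<in> B"
  then show "s \<in> conc A B"
    unfolding conc_def by (metis (mono_tags, lifting) append_take_drop_id mem_Collect_eq)
qed

lemma measurable_component_laplace [measurable]:
  "(\<lambda>Z. Z idx) \<in> borel_measurable (PiM I (\<lambda>_. laplace lam))"
proof (cases "idx \<in> I")
  case True
  then show ?thesis
    using measurable_component_singleton[OF True, of "\<lambda>_. laplace lam"] by simp
next
  case False
  then have "\<And>Z. Z \<in> space (PiM I (\<lambda>_. laplace lam)) \<Longrightarrow> Z idx = undefined"
    by (auto simp: space_PiM PiE_def extensional_def)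
  then show ?thesis
    using measurable_cong[of "PiM I (\<lambda>_. laplace lam)" "\<lambda>Z. Z idx" "\<lambda>_. undefined"] by simp
qed

lemma pred_mem_phh_L:
  "Measurable.pred (PiM I (\<lambda>_. laplace lam)) (\<lambda>Z. s \<in> phh_L tau mu y Z l t)"
proof (induction l arbitrary: t s)
  case (Suc l)
  have "s \<in> phh_L tau mu y Z (Suc l) t \<longleftrightarrow> take (2 ^ l) s \<in> phh_L tau mu y Z l (2 * t - 1)
      \<and> drop (2 ^ l) s \<in> phh_L tau mu y Z l (2 * t) \<and> phh_test tau mu y Z (Suc l) t s" for Z
    unfolding phh_L_Suc by (simp add: mem_conc_iff length_phh_L del: phh_L.simps)
  with Suc show ?case
    by (simp add: phh_test_def del: phh_L.simps) measurable
qed simp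

lemma measurable_phh_L:
  "(\<lambda>Z. phh_L tau mu y Z l t) \<in> measurable (PiM I (\<lambda>_. laplace lam)) (count_space UNIV)"
proof (rule measurable_count_space_finite_subsets)
  show "finite {s :: bool list. length s = 2 ^ l}"
    using finite_lists_length_eq[of "UNIV :: bool set" "2 ^ l"] by simp
qed (auto simp: length_phh_L pred_mem_phh_L)

lemma finite_noise_idx: "finite (noise_idx k)"
proof (rule finite_subset)
  show "noise_idx k \<subseteq> {1..k} \<times> {1..(2::nat) ^ k} \<times> {s. set s \<subseteq> UNIV \<and> length s \<le> 2 ^ k}"
    unfolding noise_idx_def
    by (auto intro: order.trans[OF _ div_le_dividend] power_increasing)
  show "finite ({1..k} \<times> {1..(2::nat) ^ k} \<times> {s :: bool list. set s \<subseteq> UNIV \<and> length s \<le> 2 ^ k})"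
    by (intro finite_cartesian_product finite_lists_length_le) simp_all
qed

section \<open>Flipping a single bit\<close>

locale single_flip =
  fixes k j :: nat and u u' :: "bool list" and x :: "bool list list" and i :: nat
  assumes length_u: "length u = 2 ^ k" and length_u': "length u' = 2 ^ k"
    and j_less: "j < 2 ^ k" and flip: "u ! j \<noteq> u' ! j" and same: "\<And>m. m \<noteq> j \<Longrightarrow> u ! m = u' ! m"
    and i_less: "i < length x" and x_i: "x ! i = u"
begin

definition x' :: "bool list list" where "x' = x[i := u']"

text \<open>The 0-based position \<open>j\<close> lies in the 1-based block \<open>jblk l\<close> of level \<open>l\<close>.\<close>
definition jblk :: "nat \<Rightarrow> nat" where "jblk l = j div 2 ^ l + 1"

abbreviation jblock :: "bool list \<Rightarrow> nat \<Rightarrow> bool list" where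
  "jblock w l \<equiv> block l (jblk l) w"

definition jnoise_idx :: "bool list \<Rightarrow> nat \<Rightarrow> nat \<times> nat \<times> bool list" where
  "jnoise_idx w l = (l, jblk l, jblock w l)"

lemma length_x': "length x' = length x"
  by (simp add: x'_def)

lemma one_le_jblk [simp]: "1 \<le> jblk l"
  by (simp add: jblk_def)

lemma block_eq_off_jblk:
  assumes "1 \<le> t" "t \<noteq> jblk l"
  shows "block l t u = block l t u'"
proof (rule nth_equalityI)
  show "length (block l t u) = length (block l t u')"
    by (simp add: length_block length_u length_u')
  fix m assume m: "m < length (block l t u)"
  then have "m < 2 ^ l" by (simp add: length_block)
  then have "(m + (t - 1) * 2 ^ l) div 2 ^ l = t - 1" by simp
  then have "2 ^ l * (t - 1) + m \<noteq> j"
    using assms by (auto simp: jblk_def algebra_simps)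
  then show "block l t u ! m = block l t u' ! m"
    using m by (simp add: nth_block same length_block length_u length_u')
qed

lemma jblock_neq: "jblock u l \<noteq> jblock u' l"
proof
  define m where "m = j mod 2 ^ l"
  have j: "2 ^ l * (jblk l - 1) + m = j" by (simp add: jblk_def m_def)
  then have "m < length (jblock u l)"
    using j_less length_u by (simp add: length_block m_def)
  moreover assume "jblock u l = jblock u' l"
  ultimately have "u ! j = u' ! j"
    using j by (metis nth_block)
  with flip show False ..
qed

lemma freq_x_x':
  "real (freq x l t s) + of_bool (block l t u' = s) = real (freq x' l t s) + of_bool (block l t u = s)"
proof -
  have x: "x = take i x @ u # drop (Suc i) x"
    using i_less x_i by (metis id_take_nth_drop)
  have x': "x' = take i x @ u' # drop (Suc i) x"
    using i_less by (simp add: x'_def upd_conv_take_nth_drop)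
  have "freq x l t s = length (filter (\<lambda>v. block l t v = s) (take i x))
      + of_bool (block l t u = s) + length (filter (\<lambda>v. block l t v = s) (drop (Suc i) x))"
    by (subst x) (simp add: freq_conv_block)
  moreover have "freq x' l t s = length (filter (\<lambda>v. block l t v = s) (take i x))
      + of_bool (block l t u' = s) + length (filter (\<lambda>v. block l t v = s) (drop (Suc i) x))"
    by (subst x') (simp add: freq_conv_block)
  ultimately show ?thesis by simp
qed

lemma freq_x'_eq:
  assumes "1 \<le> t" "\<not> (t = jblk l \<and> (s = jblock u l \<or> s = jblock u' l))"
  shows "freq x l t s = freq x' l t s"
  using assms freq_x_x'[of l t s] block_eq_off_jblk[of t l] by (cases "t = jblk l") auto

lemma freq_jblock_u: "real (freq x l (jblk l) (jblock u l)) = real (freq x' l (jblk l) (jblock u l)) + 1"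
  using freq_x_x'[of l "jblk l" "jblock u l"] jblock_neq[of l] by simp

lemma freq_jblock_u': "real (freq x' l (jblk l) (jblock u' l)) = real (freq x l (jblk l) (jblock u' l)) + 1"
  using freq_x_x'[of l "jblk l" "jblock u' l"] jblock_neq[of l] by (simp add: eq_commute)

lemma jblk_Suc: "jblk l = 2 * jblk (Suc l) - 1 \<or> jblk l = 2 * jblk (Suc l)"
proof -
  have "j div 2 ^ Suc l = (j div 2 ^ l) div 2"
    unfolding power_Suc2 by (rule div_mult2_eq)
  moreover have "n + 1 = 2 * (n div 2 + 1) - 1 \<or> n + 1 = 2 * (n div 2 + 1)" for n :: nat
    by presburger
  ultimately show ?thesis
    unfolding jblk_def by simp
qed

lemma jblock_Suc_cong:
  assumes "jblock v (Suc l) = jblock w (Suc l)"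
  shows "jblock v l = jblock w l"
proof -
  consider "jblk l = 2 * jblk (Suc l) - 1" | "jblk l = 2 * jblk (Suc l)"
    using jblk_Suc by blast
  then show ?thesis
  proof cases
    case 1
    then show ?thesis
      using assms block_left_child[OF one_le_jblk[of "Suc l"], of l v]
        block_left_child[OF one_le_jblk[of "Suc l"], of l w] by simp
  next
    case 2
    then show ?thesis
      using assms block_right_child[OF one_le_jblk[of "Suc l"], of l v]
        block_right_child[OF one_le_jblk[of "Suc l"], of l w] by simp
  qed
qed

lemma freq_jblock_Suc_le:
  "freq y (Suc l) (jblk (Suc l)) (jblock w (Suc l)) \<le> freq y l (jblk l) (jblock w l)"
  unfolding freq_conv_block by (induction y) (auto dest: jblock_Suc_cong)

lemma jblock_candidate_passed:
  assumes "jblock w (Suc l) \<in> conc (phh_L tau mu y Z l (2 * jblk (Suc l) - 1)) (phh_L tau mu y Z l (2 * jblk (Suc l)))"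
    and "1 \<le> l'" "l' \<le> l"
  shows "phh_test tau mu y Z l' (jblk l') (jblock w l')"
  using assms
proof (induction l)
  case (Suc l)
  have "jblock w (Suc l) \<in> phh_L tau mu y Z (Suc l) (jblk (Suc l))"
    using blocks_of_candidate[OF one_le_jblk Suc.prems(1)] jblk_Suc[of "Suc l"] by auto
  with Suc show ?case
    unfolding phh_L_Suc by (cases "l' = Suc l") auto
qed simp

lemma jnoise_idx_in_noise_idx:
  assumes "1 \<le> l" "l \<le> k" "length w = 2 ^ k"
  shows "jnoise_idx w l \<in> noise_idx k"
proof -
  have k: "(2::nat) ^ k = 2 ^ (k - l) * 2 ^ l"
    using assms by (simp flip: power_add)
  then have "j div 2 ^ l < 2 ^ (k - l)"
    using j_less by (simp add: div_less_iff_less_mult)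
  then have jblk: "jblk l \<le> 2 ^ (k - l)" by (simp add: jblk_def)
  then have "2 ^ l * jblk l \<le> (2::nat) ^ k"
    using k by (simp add: mult.commute)
  then have "2 ^ l * (jblk l - 1) + 2 ^ l \<le> (2::nat) ^ k"
    by (simp add: jblk_def algebra_simps)
  with jblk show ?thesis
    using assms k one_le_jblk[of l] by (simp add: noise_idx_def jnoise_idx_def length_block)
qed

end

locale single_flip_phh = single_flip +
  fixes tau mu :: real
  assumes mu_pos: "mu > 0"
begin

definition thr :: "nat \<Rightarrow> real" where "thr l = tau + real (l - 1) * mu"

definition noise_thr :: "bool list list \<Rightarrow> nat \<Rightarrow> bool list \<Rightarrow> real" where
  "noise_thr y l s = min (thr l - real (freq y l (jblk l) s)) mu"

lemma phh_test_jblk_iff: "phh_test tau mu y Z l (jblk l) s \<longleftrightarrow> noise_thr y l s < Z (l, jblk l, s)"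
  unfolding phh_test_def noise_thr_def thr_def by linarith

text \<open>Noise values that make a test at the block of \<open>j\<close> pass, resp. fail, on every dataset
  with as many rows as \<open>x\<close>.\<close>
definition pass_noise :: real where "pass_noise = mu + 1"
definition fail_noise :: real where "fail_noise = min (tau - real (length x)) mu"

lemma phh_test_pass_noise:
  "Z (l, jblk l, s) = pass_noise \<Longrightarrow> phh_test tau mu y Z l (jblk l) s"
  by (simp add: phh_test_jblk_iff noise_thr_def pass_noise_def)

lemma not_phh_test_fail_noise:
  assumes "length y = length x" "Z (l, jblk l, s) = fail_noise"
  shows "\<not> phh_test tau mu y Z l (jblk l) s"
proof -
  have "freq y l (jblk l) s \<le> length x"
    unfolding freq_def assms(1)[symmetric] by (rule length_filter_le)
  moreover have "tau \<le> thr l"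
    using mu_pos by (simp add: thr_def)
  ultimately show ?thesis
    using assms(2) by (simp add: phh_test_jblk_iff noise_thr_def fail_noise_def)
qed

definition first_fail :: "bool list list \<Rightarrow> bool list \<Rightarrow> nat \<Rightarrow> (nat \<times> nat \<times> bool list \<Rightarrow> real) \<Rightarrow> bool" where
  "first_fail y w s c \<longleftrightarrow> (\<forall>l. 1 \<le> l \<and> l < s \<longrightarrow> noise_thr y l (jblock w l) < c (jnoise_idx w l))
     \<and> (s \<le> k \<longrightarrow> \<not> noise_thr y s (jblock w s) < c (jnoise_idx w s))"

lemma first_fail_exists: "\<exists>s\<in>{1..k+1}. first_fail y w s c"
proof (cases "\<forall>l\<in>{1..k}. noise_thr y l (jblock w l) < c (jnoise_idx w l)")
  case True
  then show ?thesis by (intro bexI[of _ "k + 1"]) (auto simp: first_fail_def)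
next
  case False
  define s where "s = (LEAST l. l \<in> {1..k} \<and> \<not> noise_thr y l (jblock w l) < c (jnoise_idx w l))"
  from False have "s \<in> {1..k} \<and> \<not> noise_thr y s (jblock w s) < c (jnoise_idx w s)"
    unfolding s_def by (metis (mono_tags, lifting) LeastI)
  moreover have "noise_thr y l (jblock w l) < c (jnoise_idx w l)" if "1 \<le> l" "l < s" for l
    using that not_less_Least[of l] \<open>s \<in> {1..k} \<and> _\<close> unfolding s_def by fastforce
  ultimately have "first_fail y w s c"
    by (auto simp: first_fail_def)
  with \<open>s \<in> {1..k} \<and> _\<close> show ?thesis by auto
qed

lemma first_fail_unique:
  assumes "first_fail y w s c" "first_fail y w s' c" "s \<in> {1..k+1}" "s' \<in> {1..k+1}"
  shows "s = s'"
proof (rule linorder_cases[of s s'])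
  assume "s < s'"
  with assms show ?thesis by (auto simp: first_fail_def)
next
  assume "s' < s"
  with assms show ?thesis by (auto simp: first_fail_def)
qed

lemma phh_test_first_fail:
  assumes "first_fail y w s Z" "1 \<le> s" "1 \<le> l" "l \<le> k"
    and "jblock w l \<in> conc (phh_L tau mu y Z (l - 1) (2 * jblk l - 1)) (phh_L tau mu y Z (l - 1) (2 * jblk l))"
  shows "phh_test tau mu y Z l (jblk l) (jblock w l) \<longleftrightarrow> l < s"
proof -
  obtain l0 where l: "l = Suc l0" using assms(3) by (cases l) auto
  have passed: "phh_test tau mu y Z l' (jblk l') (jblock w l')" if "1 \<le> l'" "l' < l" for l'
    using jblock_candidate_passed[where w=w and l=l0] assms(5) that l by simp
  have "l \<le> s"
  proof (rule ccontr)
    assume "\<not> l \<le> s"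
    with assms passed[of s] show False
      by (auto simp: first_fail_def phh_test_jblk_iff jnoise_idx_def)
  qed
  then show ?thesis
    using assms by (cases "l = s") (auto simp: first_fail_def phh_test_jblk_iff jnoise_idx_def)
qed

definition crit :: "(nat \<times> nat \<times> bool list) set" where
  "crit = jnoise_idx u ` {1..k} \<union> jnoise_idx u' ` {1..k}"

definition canon_noise :: "nat \<Rightarrow> nat \<Rightarrow> nat \<times> nat \<times> bool list \<Rightarrow> real" where
  "canon_noise su su' =
     (\<lambda>(l, t, s). if l < (if s = jblock u l then su else su') then pass_noise else fail_noise)"

lemma canon_noise_u: "canon_noise su su' (jnoise_idx u l) = (if l < su then pass_noise else fail_noise)"
  by (simp add: canon_noise_def jnoise_idx_def)

lemma canon_noise_u': "canon_noise su su' (jnoise_idx u' l) = (if l < su' then pass_noise else fail_noise)"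
  using jblock_neq[of l] by (simp add: canon_noise_def jnoise_idx_def)

lemma phh_L_canon_noise:
  assumes "length y = length x" "1 \<le> su" "1 \<le> su'"
    and "first_fail y u su Z" "first_fail y u' su' Z"
    and "\<And>idx. idx \<notin> crit \<Longrightarrow> Z' idx = Z idx" "\<And>idx. idx \<in> crit \<Longrightarrow> Z' idx = canon_noise su su' idx"
  shows "phh_L tau mu y Z k 1 = phh_L tau mu y Z' k 1"
proof (rule phh_L_cong)
  fix l t s
  assume l: "1 \<le> l" "l \<le> k" and "1 \<le> t"
    and candidate: "s \<in> conc (phh_L tau mu y Z (l - 1) (2 * t - 1)) (phh_L tau mu y Z (l - 1) (2 * t))"
  show "phh_test tau mu y Z l t s = phh_test tau mu y Z' l t s"
  proof (cases "(l, t, s) \<in> crit")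
    case False
    then show ?thesis using assms(6) by (simp add: phh_test_def)
  next
    case True
    then obtain w sw where w: "(w, sw) \<in> {(u, su), (u', su')}" and idx: "(l, t, s) = jnoise_idx w l"
      by (auto simp: crit_def jnoise_idx_def)
    then have "phh_test tau mu y Z l t s \<longleftrightarrow> l < sw"
      using phh_test_first_fail[of y w sw Z l] assms candidate l by (auto simp: jnoise_idx_def)
    moreover have "Z' (l, t, s) = (if l < sw then pass_noise else fail_noise)"
      using w idx True assms(7) by (auto simp: canon_noise_u canon_noise_u')
    ultimately show ?thesis
      using idx phh_test_pass_noise not_phh_test_fail_noise[OF assms(1)] by (auto simp: jnoise_idx_def)
  qed
qed simp

lemma phh_L_x_x':
  assumes "\<And>idx. idx \<in> crit \<Longrightarrow> Z idx = pass_noise \<or> Z idx = fail_noise"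
  shows "phh_L tau mu x Z k 1 = phh_L tau mu x' Z k 1"
proof (rule phh_L_cong)
  fix l t :: nat and s
  assume l: "1 \<le> l" "l \<le> k" and t: "1 \<le> t"
  show "phh_test tau mu x Z l t s = phh_test tau mu x' Z l t s"
  proof (cases "t = jblk l \<and> (s = jblock u l \<or> s = jblock u' l)")
    case False
    with t show ?thesis by (simp add: phh_test_def freq_x'_eq)
  next
    case True
    with l have "(l, t, s) \<in> crit" by (auto simp: crit_def jnoise_idx_def)
    with True show ?thesis
      using assms phh_test_pass_noise not_phh_test_fail_noise length_x' by blast
  qed
qed simp

end

locale single_flip_laplace = single_flip_phh +
  fixes lam :: real
  assumes lam_pos: "lam > 0" and one_le_mu: "1 \<le> mu"
begin

abbreviation chain_fail_prob :: "bool list list \<Rightarrow> bool list \<Rightarrow> nat \<Rightarrow> real" where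
  "chain_fail_prob y w s \<equiv> first_fail_prob lam k (\<lambda>l. noise_thr y l (jblock w l)) s"

lemma thr_Suc: "1 \<le> l \<Longrightarrow> thr (Suc l) = thr l + mu"
  by (simp add: thr_def of_nat_diff algebra_simps)

lemma chain_fail_prob_u_le:
  "chain_fail_prob x u s
     \<le> exp ((2 + 1 / (1 - exp (- mu / lam))) / lam) * chain_fail_prob x' u s"
proof -
  define z where "z l = thr l - real (freq x l (jblk l) (jblock u l))" for l
  have x: "noise_thr x l (jblock u l) = min (z l) mu"
    and x': "noise_thr x' l (jblock u l) = min (z l + 1) mu" for l
    using freq_jblock_u[of l] by (simp_all add: noise_thr_def z_def)
  have "z l + mu \<le> z (Suc l)" if "1 \<le> l" for l
    using that freq_jblock_Suc_le[of x l u] by (simp add: z_def thr_Suc)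
  then have "(\<Sum>l = 1..k. pass_loss lam mu (z l)) \<le> (2 + 1 / (1 - exp (- mu / lam))) / lam"
    using lam_pos one_le_mu by (intro sum_pass_loss_le)
  moreover have "chain_fail_prob x u s
      \<le> exp (\<Sum>l = 1..k. pass_loss lam mu (z l)) * chain_fail_prob x' u s"
  proof (rule first_fail_prob_le[OF lam_pos])
    show "0 \<le> pass_loss lam mu (z l)" for l
      using lam_pos one_le_mu by (rule pass_loss_nonneg)
    show "laplace_cdf lam (- noise_thr x l (jblock u l))
        \<le> exp (pass_loss lam mu (z l)) * laplace_cdf lam (- noise_thr x' l (jblock u l))" for l
      unfolding x x' using lam_pos mu_pos by (rule pass_prob_le)
    have "laplace_cdf lam (min (z s) mu) \<le> laplace_cdf lam (min (z s + 1) mu)"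
      using lam_pos by (intro laplace_cdf_mono) simp_all
    also have "\<dots> \<le> exp (pass_loss lam mu (z s)) * laplace_cdf lam (min (z s + 1) mu)"
      using lam_pos one_le_mu laplace_cdf_nonneg[OF lam_pos] pass_loss_nonneg[of lam mu]
        mult_right_mono[of 1 "exp (pass_loss lam mu (z s))"] by simp
    finally show "laplace_cdf lam (noise_thr x s (jblock u s))
        \<le> exp (pass_loss lam mu (z s)) * laplace_cdf lam (noise_thr x' s (jblock u s))"
      unfolding x x' .
  qed
  ultimately show ?thesis
    using first_fail_prob_nonneg[OF lam_pos] by (meson exp_le_cancel_iff mult_right_mono order.trans)
qed

lemma chain_fail_prob_u'_le:
  "chain_fail_prob x u' s \<le> exp (1 / lam) * chain_fail_prob x' u' s"
proof -
  define z where "z l = thr l - real (freq x' l (jblk l) (jblock u' l))" for l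
  have x: "noise_thr x l (jblock u' l) = min (z l + 1) mu"
    and x': "noise_thr x' l (jblock u' l) = min (z l) mu" for l
    using freq_jblock_u'[of l] by (simp_all add: noise_thr_def z_def)
  define c where "c l = (if l = s then 1 / lam else 0)" for l
  have "chain_fail_prob x u' s \<le> exp (\<Sum>l = 1..k. c l) * chain_fail_prob x' u' s"
  proof (rule first_fail_prob_le[OF lam_pos])
    show "0 \<le> c l" for l
      using lam_pos by (simp add: c_def)
    show "laplace_cdf lam (- noise_thr x l (jblock u' l))
        \<le> exp (c l) * laplace_cdf lam (- noise_thr x' l (jblock u' l))" if "l < s" for l
      using that lam_pos by (simp add: x x' c_def laplace_cdf_mono)
    show "laplace_cdf lam (noise_thr x s (jblock u' s))
        \<le> exp (c s) * laplace_cdf lam (noise_thr x' s (jblock u' s))"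
      unfolding x x' c_def using lam_pos mu_pos by (simp add: fail_prob_le)
  qed
  moreover have "(\<Sum>l = 1..k. c l) \<le> 1 / lam"
    using lam_pos by (simp add: c_def sum.delta)
  ultimately show ?thesis
    using first_fail_prob_nonneg[OF lam_pos] by (meson exp_le_cancel_iff mult_right_mono order.trans)
qed

end

context single_flip_laplace
begin

definition noise_rest :: "(nat \<times> nat \<times> bool list) set" where "noise_rest = noise_idx k - crit"

abbreviation noise :: "(nat \<times> nat \<times> bool list) set \<Rightarrow> (nat \<times> nat \<times> bool list \<Rightarrow> real) measure" where
  "noise J \<equiv> PiM J (\<lambda>_. laplace lam)"

lemma finite_crit: "finite crit"
  by (simp add: crit_def)

lemma noise_rest_crit: "noise_rest \<inter> crit = {}" "noise_rest \<union> crit = noise_idx k"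
  using jnoise_idx_in_noise_idx length_u length_u' by (auto simp: noise_rest_def crit_def)

lemma merge_crit: "idx \<in> crit \<Longrightarrow> merge noise_rest crit (w, c) idx = c idx"
  by (auto simp: merge_def noise_rest_def)

lemma first_fail_cong:
  assumes "w \<in> {u, u'}" "s \<in> {1..k+1}" "\<And>idx. idx \<in> crit \<Longrightarrow> c idx = c' idx"
  shows "first_fail y w s c \<longleftrightarrow> first_fail y w s c'"
proof -
  have "c (jnoise_idx w l) = c' (jnoise_idx w l)" if "1 \<le> l" "l \<le> k" for l
    using assms(1) that by (intro assms(3)) (auto simp: crit_def)
  with assms(2) show ?thesis
    by (auto simp: first_fail_def)
qed

lemma phh_L_merge_canon_noise:
  assumes "y \<in> {x, x'}" "su \<in> {1..k+1}" "su' \<in> {1..k+1}"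
    and "first_fail y u su c" "first_fail y u' su' c"
  shows "phh_L tau mu y (merge noise_rest crit (w, c)) k 1
    = phh_L tau mu x (merge noise_rest crit (w, canon_noise su su')) k 1"
proof -
  have "phh_L tau mu y (merge noise_rest crit (w, c)) k 1
      = phh_L tau mu y (merge noise_rest crit (w, canon_noise su su')) k 1"
  proof (rule phh_L_canon_noise)
    show "length y = length x" using assms(1) length_x' by auto
    show "first_fail y u su (merge noise_rest crit (w, c))" "first_fail y u' su' (merge noise_rest crit (w, c))"
      using assms first_fail_cong[of _ _ "merge noise_rest crit (w, c)" c] by (simp_all add: merge_crit)
  qed (use assms in \<open>auto simp: merge_crit merge_def noise_rest_def\<close>)
  also have "\<dots> = phh_L tau mu x (merge noise_rest crit (w, canon_noise su su')) k 1"
    using assms(1) phh_L_x_x'[of "merge noise_rest crit (w, canon_noise su su')"]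
    by (auto simp: merge_crit canon_noise_def split: prod.splits)
  finally show ?thesis .
qed

definition canon_event :: "nat \<Rightarrow> nat \<Rightarrow> bool list set set \<Rightarrow> (nat \<times> nat \<times> bool list \<Rightarrow> real) set" where
  "canon_event su su' E = {w \<in> space (noise noise_rest).
     phh_L tau mu x (merge noise_rest crit (w, canon_noise su su')) k 1 \<in> E}"

definition fail_event :: "bool list list \<Rightarrow> nat \<Rightarrow> nat \<Rightarrow> (nat \<times> nat \<times> bool list \<Rightarrow> real) set" where
  "fail_event y su su' = {c \<in> space (noise crit). first_fail y u su c \<and> first_fail y u' su' c}"

lemma phh_event_decomp:
  assumes "y \<in> {x, x'}"
  shows "{p \<in> space (noise noise_rest \<Otimes>\<^sub>M noise crit). phh_L tau mu y (merge noise_rest crit p) k 1 \<in> E}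
    = (\<Union>(su, su') \<in> {1..k+1} \<times> {1..k+1}. canon_event su su' E \<times> fail_event y su su')"
proof (intro equalityI subsetI)
  fix p
  assume p: "p \<in> {p \<in> space (noise noise_rest \<Otimes>\<^sub>M noise crit). phh_L tau mu y (merge noise_rest crit p) k 1 \<in> E}"
  obtain w c where wc: "p = (w, c)" by (cases p)
  obtain su where su: "su \<in> {1..k+1}" "first_fail y u su c" using first_fail_exists by blast
  obtain su' where su': "su' \<in> {1..k+1}" "first_fail y u' su' c" using first_fail_exists by blast
  have "w \<in> canon_event su su' E" "c \<in> fail_event y su su'"
    using p wc su su' phh_L_merge_canon_noise[OF assms su(1) su'(1) su(2) su'(2), of w]
    by (auto simp: canon_event_def fail_event_def space_pair_measure)
  with su su' wc show "p \<in> (\<Union>(su, su') \<in> {1..k+1} \<times> {1..k+1}. canon_event su su' E \<times> fail_event y su su')"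
    by blast
next
  fix p
  assume "p \<in> (\<Union>(su, su') \<in> {1..k+1} \<times> {1..k+1}. canon_event su su' E \<times> fail_event y su su')"
  then obtain su su' w c where su: "su \<in> {1..k+1}" "su' \<in> {1..k+1}" and wc: "p = (w, c)"
    and w: "w \<in> canon_event su su' E" and c: "c \<in> fail_event y su su'"
    by blast
  with phh_L_merge_canon_noise[OF assms su, of c w]
  show "p \<in> {p \<in> space (noise noise_rest \<Otimes>\<^sub>M noise crit). phh_L tau mu y (merge noise_rest crit p) k 1 \<in> E}"
    by (auto simp: canon_event_def fail_event_def space_pair_measure)
qed

lemma prob_space_noise: "prob_space (noise J)"
  by (intro prob_space_PiM prob_space_laplace[OF lam_pos])

lemma measurable_merge_noise:
  "merge noise_rest crit \<in> measurable (noise noise_rest \<Otimes>\<^sub>M noise crit) (noise (noise_idx k))"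
  using measurable_merge[of noise_rest crit "\<lambda>_. laplace lam"] by (simp add: noise_rest_crit(2))

lemma measure_PrivHeavyHitter_eq:
  "measure (PrivHeavyHitter lam tau mu k y) E = measure (noise noise_rest \<Otimes>\<^sub>M noise crit)
     {p \<in> space (noise noise_rest \<Otimes>\<^sub>M noise crit). phh_L tau mu y (merge noise_rest crit p) k 1 \<in> E}"
proof -
  interpret product_sigma_finite "\<lambda>_. laplace lam"
    using prob_space_imp_sigma_finite[OF prob_space_laplace[OF lam_pos]] by (simp add: product_sigma_finite_def)
  have "distr (noise noise_rest \<Otimes>\<^sub>M noise crit) (noise (noise_idx k)) (merge noise_rest crit) = noise (noise_idx k)"
    using distr_merge[OF noise_rest_crit(1) _ finite_crit] finite_noise_idx
    unfolding noise_rest_crit(2) by (simp add: noise_rest_def)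
  then have "PrivHeavyHitter lam tau mu k y = distr (noise noise_rest \<Otimes>\<^sub>M noise crit) (count_space UNIV)
      ((\<lambda>Z. phh_L tau mu y Z k 1) \<circ> merge noise_rest crit)"
    unfolding PrivHeavyHitter_def by (metis distr_distr measurable_merge_noise measurable_phh_L)
  then show ?thesis
    using measurable_comp[OF measurable_merge_noise measurable_phh_L]
    by (simp add: measure_distr vimage_def Int_def conj_commute)
qed

definition fail_interval :: "bool list list \<Rightarrow> bool list \<Rightarrow> nat \<Rightarrow> nat \<Rightarrow> real set" where
  "fail_interval y w s l = (if l < s then {noise_thr y l (jblock w l)<..}
     else if l = s then {..noise_thr y l (jblock w l)} else UNIV)"

definition fail_box :: "bool list list \<Rightarrow> nat \<Rightarrow> nat \<Rightarrow> nat \<times> nat \<times> bool list \<Rightarrow> real set" where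
  "fail_box y su su' = (\<lambda>(l, t, s). if s = jblock u l then fail_interval y u su l else fail_interval y u' su' l)"

lemma fail_box_u: "fail_box y su su' (jnoise_idx u l) = fail_interval y u su l"
  by (simp add: fail_box_def jnoise_idx_def)

lemma fail_box_u': "fail_box y su su' (jnoise_idx u' l) = fail_interval y u' su' l"
  using jblock_neq[of l] by (simp add: fail_box_def jnoise_idx_def)

lemma first_fail_iff_fail_interval:
  "s \<in> {1..k+1} \<Longrightarrow> first_fail y w s c \<longleftrightarrow> (\<forall>l\<in>{1..k}. c (jnoise_idx w l) \<in> fail_interval y w s l)"
  by (auto simp: first_fail_def fail_interval_def not_less)

lemma fail_event_eq_PiE:
  assumes "su \<in> {1..k+1}" "su' \<in> {1..k+1}"
  shows "fail_event y su su' = PiE crit (fail_box y su su')"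
proof -
  have "(\<forall>idx\<in>crit. c idx \<in> fail_box y su su' idx) \<longleftrightarrow> first_fail y u su c \<and> first_fail y u' su' c" for c
    unfolding crit_def ball_Un Ball_image_comp using assms
    by (simp add: first_fail_iff_fail_interval fail_box_u fail_box_u' o_def)
  then show ?thesis
    by (auto simp: fail_event_def space_PiM PiE_def)
qed

lemma emeasure_fail_interval:
  "emeasure (laplace lam) (fail_interval y w s l) = ennreal (if l < s then laplace_cdf lam (- noise_thr y l (jblock w l))
     else if l = s then laplace_cdf lam (noise_thr y l (jblock w l)) else 1)"
proof -
  interpret prob_space "laplace lam" by (rule prob_space_laplace[OF lam_pos])
  show ?thesis
    using prob_space by (simp add: fail_interval_def emeasure_eq_measure
        measure_laplace_greaterThan[OF lam_pos] measure_laplace_atMost[OF lam_pos])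
qed

lemma measure_fail_event:
  assumes "su \<in> {1..k+1}" "su' \<in> {1..k+1}"
  shows "measure (noise crit) (fail_event y su su') = chain_fail_prob y u su * chain_fail_prob y u' su'"
proof -
  interpret product_sigma_finite "\<lambda>_. laplace lam"
    using prob_space_imp_sigma_finite[OF prob_space_laplace[OF lam_pos]] by (simp add: product_sigma_finite_def)
  have inj: "inj_on (jnoise_idx w) A" for w A
    by (simp add: inj_on_def jnoise_idx_def)
  have "emeasure (noise crit) (fail_event y su su') = (\<Prod>idx\<in>crit. emeasure (laplace lam) (fail_box y su su' idx))"
    unfolding fail_event_eq_PiE[OF assms]
    by (rule emeasure_PiM[OF finite_crit]) (auto simp: fail_box_def fail_interval_def split: prod.split)
  also have "\<dots> = (\<Prod>idx\<in>jnoise_idx u ` {1..k}. emeasure (laplace lam) (fail_box y su su' idx))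
      * (\<Prod>idx\<in>jnoise_idx u' ` {1..k}. emeasure (laplace lam) (fail_box y su su' idx))"
    unfolding crit_def by (rule prod.union_disjoint) (auto simp: jnoise_idx_def jblock_neq)
  also have "\<dots> = (\<Prod>l = 1..k. emeasure (laplace lam) (fail_interval y u su l))
      * (\<Prod>l = 1..k. emeasure (laplace lam) (fail_interval y u' su' l))"
    by (simp add: prod.reindex[OF inj] fail_box_u fail_box_u')
  also have "\<dots> = ennreal (chain_fail_prob y u su * chain_fail_prob y u' su')"
    unfolding emeasure_fail_interval first_fail_prob_def
    by (simp add: prod_ennreal laplace_cdf_nonneg[OF lam_pos] prod_nonneg ennreal_mult)
  finally show ?thesis
    by (simp add: measure_def first_fail_prob_nonneg[OF lam_pos])
qed

lemma sets_fail_event: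
  assumes "su \<in> {1..k+1}" "su' \<in> {1..k+1}"
  shows "fail_event y su su' \<in> sets (noise crit)"
  unfolding fail_event_eq_PiE[OF assms]
  by (rule sets_PiM_I_finite[OF finite_crit]) (auto simp: fail_box_def fail_interval_def split: prod.split)

lemma sets_canon_event: "canon_event su su' E \<in> sets (noise noise_rest)"
proof -
  let ?c = "restrict (canon_noise su su') crit"
  have "(\<lambda>w. (w, ?c)) \<in> measurable (noise noise_rest) (noise noise_rest \<Otimes>\<^sub>M noise crit)"
    by (intro measurable_Pair measurable_ident_sets measurable_const) (simp_all add: space_PiM)
  from measurable_comp[OF measurable_comp[OF this measurable_merge_noise] measurable_phh_L]
  have "(\<lambda>w. phh_L tau mu x (merge noise_rest crit (w, ?c)) k 1) \<in> measurable (noise noise_rest) (count_space UNIV)"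
    by (simp add: o_def)
  from measurable_sets[OF this, of E]
  have "(\<lambda>w. phh_L tau mu x (merge noise_rest crit (w, ?c)) k 1) -` E \<inter> space (noise noise_rest) \<in> sets (noise noise_rest)"
    by simp
  then show ?thesis
    by (simp add: canon_event_def vimage_def Int_def conj_commute)
qed

lemma measure_PrivHeavyHitter_sum:
  assumes "y \<in> {x, x'}"
  shows "measure (PrivHeavyHitter lam tau mu k y) E = (\<Sum>(su, su') \<in> {1..k+1} \<times> {1..k+1}.
    measure (noise noise_rest) (canon_event su su' E) * (chain_fail_prob y u su * chain_fail_prob y u' su'))"
proof -
  interpret pair: prob_space "noise noise_rest \<Otimes>\<^sub>M noise crit"
    by (intro prob_space_pair prob_space_noise)
  interpret crit: sigma_finite_measure "noise crit"
    by (intro prob_space_imp_sigma_finite prob_space_noise)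
  let ?S = "{1..k+1} \<times> {1..k+1}"
  let ?F = "\<lambda>(su, su'). canon_event su su' E \<times> fail_event y su su'"
  have disjoint: "disjoint_family_on ?F ?S"
    unfolding disjoint_family_on_def
    using first_fail_unique[of y u] first_fail_unique[of y u'] by (fastforce simp: fail_event_def)
  have "measure (PrivHeavyHitter lam tau mu k y) E = measure (noise noise_rest \<Otimes>\<^sub>M noise crit) (\<Union>p\<in>?S. ?F p)"
    unfolding measure_PrivHeavyHitter_eq phh_event_decomp[OF assms] by (simp add: split_beta)
  also have "\<dots> = (\<Sum>p\<in>?S. measure (noise noise_rest \<Otimes>\<^sub>M noise crit) (?F p))"
    using disjoint sets_canon_event sets_fail_event
    by (intro measure_finite_Union) (auto simp: pair.emeasure_finite)
  also have "\<dots> = (\<Sum>(su, su') \<in> ?S. measure (noise noise_rest) (canon_event su su' E) * measure (noise crit) (fail_event y su su'))"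
    using sets_canon_event sets_fail_event
    by (intro sum.cong) (auto simp: measure_def crit.emeasure_pair_measure_Times enn2real_mult)
  also have "\<dots> = (\<Sum>(su, su') \<in> ?S. measure (noise noise_rest) (canon_event su su' E) *
      (chain_fail_prob y u su * chain_fail_prob y u' su'))"
    by (intro sum.cong) (auto simp: measure_fail_event)
  finally show ?thesis .
qed

lemma measure_PrivHeavyHitter_le:
  "measure (PrivHeavyHitter lam tau mu k x) E
     \<le> exp ((3 + 1 / (1 - exp (- mu / lam))) / lam) * measure (PrivHeavyHitter lam tau mu k x') E"
proof -
  let ?Q = "\<lambda>y su su'. chain_fail_prob y u su * chain_fail_prob y u' su'"
  let ?C = "exp ((3 + 1 / (1 - exp (- mu / lam))) / lam)"
  have "?Q x su su' \<le> ?C * ?Q x' su su'" for su su'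
  proof -
    have "?Q x su su' \<le> (exp ((2 + 1 / (1 - exp (- mu / lam))) / lam) * chain_fail_prob x' u su)
        * (exp (1 / lam) * chain_fail_prob x' u' su')"
      using first_fail_prob_nonneg[OF lam_pos]
      by (intro mult_mono chain_fail_prob_u_le chain_fail_prob_u'_le mult_nonneg_nonneg) simp_all
    also have "\<dots> = ?C * ?Q x' su su'"
      by (simp add: add_divide_distrib algebra_simps flip: exp_add)
    finally show ?thesis .
  qed
  then have "measure (PrivHeavyHitter lam tau mu k x) E
      \<le> (\<Sum>(su, su') \<in> {1..k+1} \<times> {1..k+1}. measure (noise noise_rest) (canon_event su su' E) * (?C * ?Q x' su su'))"
    unfolding measure_PrivHeavyHitter_sum[of x E, OF insertI1] by (intro sum_mono) (auto intro: mult_left_mono)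
  also have "\<dots> = ?C * measure (PrivHeavyHitter lam tau mu k x') E"
    unfolding measure_PrivHeavyHitter_sum[of x' E, OF insertI2[OF singletonI]]
    by (simp add: sum_distrib_left split_beta algebra_simps)
  finally show ?thesis .
qed

end

lemma measure_PrivHeavyHitter_flip_le:
  assumes "lam > 0" "1 \<le> mu" "i < length x" "length (x ! i) = 2 ^ k" "length v = 2 ^ k"
    and "j < 2 ^ k" "x ! i ! j \<noteq> v ! j" "\<And>m. m \<noteq> j \<Longrightarrow> x ! i ! m = v ! m"
  shows "measure (PrivHeavyHitter lam tau mu k x) E
    \<le> exp ((3 + 1 / (1 - exp (- mu / lam))) / lam) * measure (PrivHeavyHitter lam tau mu k (x[i := v])) E"
proof -
  interpret single_flip_laplace k j "x ! i" v x i tau mu lam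
    using assms by unfold_locales auto
  from measure_PrivHeavyHitter_le show ?thesis
    by (simp add: x'_def)
qed

lemma hamming_eq_0_iff: "length v = length w \<Longrightarrow> hamming v w = 0 \<longleftrightarrow> v = w"
  by (auto simp: hamming_def list_eq_iff_nth_eq)

lemma hamming_update:
  assumes "j < length v" "v ! j \<noteq> w ! j"
  shows "hamming (v[j := w ! j]) w = hamming v w - 1"
proof -
  have "{m. m < length (v[j := w ! j]) \<and> v[j := w ! j] ! m \<noteq> w ! m} = {m. m < length v \<and> v ! m \<noteq> w ! m} - {j}"
    using assms by (auto simp: nth_list_update)
  with assms show ?thesis
    by (simp add: hamming_def)
qed

lemma measure_PrivHeavyHitter_update_le:
  assumes "lam > 0" "1 \<le> mu" "i < length x" "length (x ! i) = 2 ^ k" "length v = 2 ^ k"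
  shows "measure (PrivHeavyHitter lam tau mu k x) E \<le> exp ((3 + 1 / (1 - exp (- mu / lam))) / lam * hamming (x ! i) v)
    * measure (PrivHeavyHitter lam tau mu k (x[i := v])) E"
  using assms(3-)
proof (induction "hamming (x ! i) v" arbitrary: x)
  case 0
  then have "x[i := v] = x"
    by (metis hamming_eq_0_iff list_update_id)
  with "0.hyps" show ?case by (simp flip: "0.hyps")
next
  case (Suc h)
  let ?C = "(3 + 1 / (1 - exp (- mu / lam))) / lam"
  have "{m. m < length (x ! i) \<and> x ! i ! m \<noteq> v ! m} \<noteq> {}"
    using Suc.hyps(2) unfolding hamming_def by (metis card.empty nat.distinct(1))
  then obtain j where j: "j < 2 ^ k" "x ! i ! j \<noteq> v ! j"
    using Suc.prems by auto
  define y where "y = x[i := (x ! i)[j := v ! j]]"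
  have y: "h = hamming (y ! i) v" "i < length y" "length (y ! i) = 2 ^ k" "y[i := v] = x[i := v]"
    using Suc.hyps(2) Suc.prems j hamming_update[of j "x ! i" v] by (simp_all add: y_def)
  have "measure (PrivHeavyHitter lam tau mu k x) E \<le> exp ?C * measure (PrivHeavyHitter lam tau mu k y) E"
    unfolding y_def using assms(1,2) Suc.prems j
    by (intro measure_PrivHeavyHitter_flip_le) auto
  also have "measure (PrivHeavyHitter lam tau mu k y) E
      \<le> exp (?C * h) * measure (PrivHeavyHitter lam tau mu k (x[i := v])) E"
    using Suc.hyps(1)[OF y(1-3) Suc.prems(3)] by (simp add: y(4) flip: y(1))
  also have "exp ?C * (exp (?C * h) * measure (PrivHeavyHitter lam tau mu k (x[i := v])) E)
      = exp (?C * hamming (x ! i) v) * measure (PrivHeavyHitter lam tau mu k (x[i := v])) E"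
    unfolding Suc.hyps(2)[symmetric] of_nat_Suc distrib_left exp_add by simp
  finally show ?case
    by (simp add: mult_left_mono)
qed

theorem lemmaA1:
  fixes k :: nat and lam mu eps tau :: real
  assumes "lam > 0" and "mu > 0" and "mu > 1"
    and "2 / lam * (1 + 1 / (1 - exp (- mu / lam))) \<le> eps"
    and "tau > 0"
  shows "nabla0_DP eps (2 ^ k) (PrivHeavyHitter lam tau mu k)"
  unfolding nabla0_DP_def
proof (intro allI impI)
  fix x x' :: "bool list list" and i :: nat and E :: "bool list set set"
  assume neighbours: "length x' = length x \<and> (\<forall>v\<in>set x. length v = 2 ^ k) \<and> (\<forall>v\<in>set x'. length v = 2 ^ k)
    \<and> i < length x \<and> (\<forall>j<length x. j \<noteq> i \<longrightarrow> x ! j = x' ! j)"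
  let ?C = "(3 + 1 / (1 - exp (- mu / lam))) / lam"
  let ?h = "real (hamming (x ! i) (x' ! i))"
  have "1 \<le> 1 / (1 - exp (- mu / lam))"
    using assms(1,3) by (intro one_le_geometric_factor) simp_all
  then have "?C \<le> eps"
    using assms(1,4) by (simp add: field_simps)
  have "measure (PrivHeavyHitter lam tau mu k x) E
      \<le> exp (?C * ?h) * measure (PrivHeavyHitter lam tau mu k (x[i := x' ! i])) E"
    using assms(1,3) neighbours by (intro measure_PrivHeavyHitter_update_le) auto
  also have "x[i := x' ! i] = x'"
    using neighbours by (intro nth_equalityI) (auto simp: nth_list_update)
  also have "exp (?C * ?h) \<le> exp (eps * ?h)"
    using mult_right_mono[OF \<open>?C \<le> eps\<close>, of ?h] by simp
  finally show "measure (PrivHeavyHitter lam tau mu k x) E \<le> exp (eps * ?h) * measure (PrivHeavyHitter lam tau mu k x') E"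
    by (simp add: mult_right_mono)
qed

end
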